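(* For every $A\in\mathbb{R}_+^{n\times n}$, $$\min_{B\in\Omega(A)}\rho(B)\;\leq\;\frac{1}{n}\sum_{i=1}^n\sum_{j=1}^n a_{i,j}\;\leq\;\max_{B\in\Omega(A)}\rho(B).$$
   Context: $\mathbb{R}_+^{n\times n}$ denotes the set of $n\times n$ matrices with nonnegative real entries. For $A=(a_{i,j})\in\mathbb{R}_+^{n\times n}$, the set of row-permuted matrices is $\Omega(A)=\{B\in\mathbb{R}_+^{n\times n}:\ \forall i\ \exists\text{ a permutation }\phi_i \text{ of }\{1,\dots,n\}\text{ with } b_{i,j}=a_{i,\phi_i(j)}\ \forall j\}$, i.e. each row of $B$ is a rearrangement of the corresponding row of $A$. $\rho(B)$ denotes the spectral radius (Perron root) of $B$. $\Omega(A)$ is a finite set. *)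

theory Defs
  imports "Jordan_Normal_Form.Spectral_Radius" "HOL-Combinatorics.Permutations"
begin

definition row_permuted :: "nat \<Rightarrow> real mat \<Rightarrow> real mat set" where
  "row_permuted n A = {B \<in> carrier_mat n n. \<forall>i<n. \<exists>\<phi>. \<phi> permutes {..<n} \<and>
       (\<forall>j<n. B $$ (i, j) = A $$ (i, \<phi> j))}"

definition rho :: "real mat \<Rightarrow> real" where
  "rho B = spectral_radius (map_mat complex_of_real B)"

end

theory Submission
  imports Defs
begin

text \<open>Let r be the vector of row sums of A and S their total. For a fixed row i, the sums
  \<open>\<Sum>\<^sub>j A(i, (j + k) mod n) * r(j)\<close> over the n cyclic shifts k add up to r(i) * S, so some shift
  makes this sum at most r(i) * S / n and another makes it at least r(i) * S / n. Shifting every row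
  accordingly gives B, B' in Omega(A) with B r \<le> (S / n) r \<le> B' r, and the Collatz--Wielandt bounds for
  nonnegative matrices give rho(B) \<le> S / n \<le> rho(B'). The bound for B needs no positivity of r:
  a row with r(i) = 0 is zero in A, hence in B.\<close>

lemma index_mult_mat_vec_sum:
  assumes "M \<in> carrier_mat n n" "v \<in> carrier_vec n" "i < n"
  shows "(M *\<^sub>v v) $ i = (\<Sum>j<n. M $$ (i, j) * v $ j)"
  using assms by (auto simp: scalar_prod_def lessThan_atLeast0 intro!: sum.cong)

lemma index_mult_mat_sum:
  assumes "M \<in> carrier_mat n n" "N \<in> carrier_mat n n" "i < n" "j < n"
  shows "(M * N) $$ (i, j) = (\<Sum>l<n. M $$ (i, l) * N $$ (l, j))"
  using assms by (auto simp: scalar_prod_def lessThan_atLeast0 intro!: sum.cong)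

lemma exists_le_mean:
  fixes f :: "'a \<Rightarrow> 'b::linordered_semidom"
  assumes "finite I" "I \<noteq> {}"
  shows "\<exists>i\<in>I. of_nat (card I) * f i \<le> sum f I"
proof -
  have "Min (f ` I) \<in> f ` I"
    using assms by simp
  then obtain i where i: "i \<in> I" "f i = Min (f ` I)"
    by auto
  then have "of_nat (card I) * f i \<le> sum f I"
    using assms by (intro sum_bounded_below) simp
  with i show ?thesis by blast
qed

lemma exists_ge_mean:
  fixes f :: "'a \<Rightarrow> 'b::linordered_semidom"
  assumes "finite I" "I \<noteq> {}"
  shows "\<exists>i\<in>I. sum f I \<le> of_nat (card I) * f i"
proof -
  have "Max (f ` I) \<in> f ` I"
    using assms by simp
  then obtain i where i: "i \<in> I" "f i = Max (f ` I)"
    by auto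
  then have "sum f I \<le> of_nat (card I) * f i"
    using assms by (intro sum_bounded_above) simp
  with i show ?thesis by blast
qed

lemma add_mod_right_cancel:
  fixes j j' k n :: nat
  assumes "j < n" "j' < n" "(j + k) mod n = (j' + k) mod n"
  shows "j = j'"
proof -
  have "a = b" if "a \<le> b" "b < n" "(a + k) mod n = (b + k) mod n" for a b
  proof -
    have "n dvd b - a"
      using mod_eq_dvd_iff_nat[of "a + k" "b + k" n] that by simp
    moreover have "b - a < n"
      using that by linarith
    ultimately show ?thesis
      using that(1) by (cases "a = b") (auto dest: dvd_imp_le)
  qed
  from this[of j j'] this[of j' j] assms show ?thesis
    by linarith
qed

definition rotate_index :: "nat \<Rightarrow> nat \<Rightarrow> nat \<Rightarrow> nat" where
  "rotate_index n k j = (if j < n then (j + k) mod n else j)"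

lemma rotate_index_permutes: "rotate_index n k permutes {..<n}"
proof (rule bij_imp_permutes)
  have "inj_on (rotate_index n k) {..<n}"
    by (auto simp: inj_on_def rotate_index_def intro: add_mod_right_cancel)
  moreover have "rotate_index n k ` {..<n} \<subseteq> {..<n}"
    by (auto simp: rotate_index_def)
  ultimately show "bij_betw (rotate_index n k) {..<n} {..<n}"
    by (simp add: bij_betw_def endo_inj_surj)
  show "x \<notin> {..<n} \<Longrightarrow> rotate_index n k x = x" for x
    by (simp add: rotate_index_def)
qed

lemma rotate_index_commute: "j < n \<Longrightarrow> k < n \<Longrightarrow> rotate_index n k j = rotate_index n j k"
  by (simp add: rotate_index_def add.commute)

lemma sum_rotations:
  fixes a x :: "nat \<Rightarrow> 'a::comm_semiring_0"
  shows "(\<Sum>k<n. \<Sum>j<n. a (rotate_index n k j) * x j) = sum a {..<n} * sum x {..<n}"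
proof -
  have column: "(\<Sum>k<n. a (rotate_index n k j)) = sum a {..<n}" if "j < n" for j
  proof -
    have "(\<Sum>k<n. a (rotate_index n k j)) = (\<Sum>k<n. a (rotate_index n j k))"
      using that by (intro sum.cong) (simp_all add: rotate_index_commute)
    also have "\<dots> = sum a {..<n}"
      using sum.permute[OF rotate_index_permutes, of a n j] by (simp add: comp_def)
    finally show ?thesis .
  qed
  have "(\<Sum>k<n. \<Sum>j<n. a (rotate_index n k j) * x j) = (\<Sum>j<n. (\<Sum>k<n. a (rotate_index n k j)) * x j)"
    by (subst sum.swap) (simp add: sum_distrib_right)
  also have "\<dots> = (\<Sum>j<n. sum a {..<n} * x j)"
    by (simp add: column)
  finally show ?thesis
    by (simp add: sum_distrib_left)
qed

lemma exists_rotation_le_mean: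
  fixes a x :: "nat \<Rightarrow> real"
  assumes "n > 0"
  shows "\<exists>k. real n * (\<Sum>j<n. a (rotate_index n k j) * x j) \<le> sum a {..<n} * sum x {..<n}"
  using exists_le_mean[of "{..<n}" "\<lambda>k. \<Sum>j<n. a (rotate_index n k j) * x j"] assms
  by (auto simp: sum_rotations)

lemma exists_rotation_ge_mean:
  fixes a x :: "nat \<Rightarrow> real"
  assumes "n > 0"
  shows "\<exists>k. sum a {..<n} * sum x {..<n} \<le> real n * (\<Sum>j<n. a (rotate_index n k j) * x j)"
  using exists_ge_mean[of "{..<n}" "\<lambda>k. \<Sum>j<n. a (rotate_index n k j) * x j"] assms
  by (auto simp: sum_rotations)

definition rotate_rows :: "nat \<Rightarrow> (nat \<Rightarrow> nat) \<Rightarrow> 'a mat \<Rightarrow> 'a mat" where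
  "rotate_rows n k A = mat n n (\<lambda>(i, j). A $$ (i, rotate_index n (k i) j))"

lemma rotate_rows_in_row_permuted: "rotate_rows n k A \<in> row_permuted n A"
  unfolding row_permuted_def rotate_rows_def
  using rotate_index_permutes by auto

lemma exists_row_permuted_le:
  fixes A :: "real mat" and x :: "nat \<Rightarrow> real"
  assumes "n > 0"
  shows "\<exists>B\<in>row_permuted n A. \<forall>i<n.
           real n * (\<Sum>j<n. B $$ (i, j) * x j) \<le> (\<Sum>j<n. A $$ (i, j)) * sum x {..<n}"
proof -
  have "\<forall>i. \<exists>k. real n * (\<Sum>j<n. A $$ (i, rotate_index n k j) * x j)
                 \<le> (\<Sum>j<n. A $$ (i, j)) * sum x {..<n}"
    using exists_rotation_le_mean[OF assms, of "\<lambda>l. A $$ (_, l)" x] by simp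
  then obtain k where k: "\<forall>i. real n * (\<Sum>j<n. A $$ (i, rotate_index n (k i) j) * x j)
                           \<le> (\<Sum>j<n. A $$ (i, j)) * sum x {..<n}"
    by (rule choice[THEN exE])
  have "rotate_rows n k A $$ (i, j) = A $$ (i, rotate_index n (k i) j)" if "i < n" "j < n" for i j
    using that by (simp add: rotate_rows_def)
  with k show ?thesis
    using rotate_rows_in_row_permuted[of n k A] by (intro bexI[of _ "rotate_rows n k A"]) simp_all
qed

lemma exists_row_permuted_ge:
  fixes A :: "real mat" and x :: "nat \<Rightarrow> real"
  assumes "n > 0"
  shows "\<exists>B\<in>row_permuted n A. \<forall>i<n.
           (\<Sum>j<n. A $$ (i, j)) * sum x {..<n} \<le> real n * (\<Sum>j<n. B $$ (i, j) * x j)"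
proof -
  have "\<forall>i. \<exists>k. (\<Sum>j<n. A $$ (i, j)) * sum x {..<n}
                 \<le> real n * (\<Sum>j<n. A $$ (i, rotate_index n k j) * x j)"
    using exists_rotation_ge_mean[OF assms, of "\<lambda>l. A $$ (_, l)" x] by simp
  then obtain k where k: "\<forall>i. (\<Sum>j<n. A $$ (i, j)) * sum x {..<n}
                           \<le> real n * (\<Sum>j<n. A $$ (i, rotate_index n (k i) j) * x j)"
    by (rule choice[THEN exE])
  have "rotate_rows n k A $$ (i, j) = A $$ (i, rotate_index n (k i) j)" if "i < n" "j < n" for i j
    using that by (simp add: rotate_rows_def)
  with k show ?thesis
    using rotate_rows_in_row_permuted[of n k A] by (intro bexI[of _ "rotate_rows n k A"]) simp_all
qed

lemma row_permuted_entry: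
  assumes "B \<in> row_permuted n A" "i < n" "j < n"
  shows "\<exists>l<n. B $$ (i, j) = A $$ (i, l)"
proof -
  obtain \<phi> where \<phi>: "\<phi> permutes {..<n}" "\<forall>j<n. B $$ (i, j) = A $$ (i, \<phi> j)"
    using assms unfolding row_permuted_def by blast
  then show ?thesis
    using permutes_in_image[OF \<phi>(1), of j] assms(3) by auto
qed

lemma row_permuted_nonneg:
  assumes "B \<in> row_permuted n A" and "\<And>i j. i < n \<Longrightarrow> j < n \<Longrightarrow> 0 \<le> A $$ (i, j)"
    and "i < n" "j < n"
  shows "0 \<le> B $$ (i, j)"
  using row_permuted_entry[OF assms(1,3,4)] assms(2,3) by force

lemma finite_row_permuted: "finite (row_permuted n A)"
proof -
  let ?S = "{..<n} \<times> {..<n}"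
  let ?F = "{f. \<forall>p. (p \<in> ?S \<longrightarrow> f p \<in> (\<lambda>p. A $$ p) ` ?S) \<and> (p \<notin> ?S \<longrightarrow> f p = 0)}"
  have "finite ?F"
    by (rule finite_set_of_finite_funs) auto
  moreover have "row_permuted n A \<subseteq> (\<lambda>f. mat n n f) ` ?F"
  proof
    fix B assume B: "B \<in> row_permuted n A"
    let ?f = "\<lambda>p. if p \<in> ?S then B $$ p else 0"
    have "B = mat n n ?f"
      using B by (auto simp: row_permuted_def mat_eq_iff)
    moreover have "B $$ (i, j) \<in> (\<lambda>p. A $$ p) ` ?S" if "i < n" "j < n" for i j
      using row_permuted_entry[OF B that] that(1) by force
    then have "?f \<in> ?F"
      by auto
    ultimately show "B \<in> (\<lambda>f. mat n n f) ` ?F"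
      by blast
  qed
  ultimately show ?thesis
    using finite_subset by blast
qed

lemma eigenvector_index:
  fixes M :: "'a::comm_ring_1 mat"
  assumes "M \<in> carrier_mat n n" "eigenvector M v \<mu>" "i < n"
  shows "\<mu> * v $ i = (\<Sum>j<n. M $$ (i, j) * v $ j)"
proof -
  have "v \<in> carrier_vec n" "M *\<^sub>v v = \<mu> \<cdot>\<^sub>v v"
    using assms unfolding eigenvector_def by auto
  with assms show ?thesis
    using index_mult_mat_vec_sum[of M n v i] by simp
qed

lemma eigenvector_smult_mat:
  fixes M :: "'a::comm_ring_1 mat"
  assumes M: "M \<in> carrier_mat n n" and ev: "eigenvector M v \<mu>"
  shows "eigenvector (c \<cdot>\<^sub>m M) v (c * \<mu>)"
proof -
  have v: "v \<in> carrier_vec n"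
    using M ev unfolding eigenvector_def by simp
  have "(c \<cdot>\<^sub>m M) *\<^sub>v v = c \<cdot>\<^sub>v (M *\<^sub>v v)"
    using M v by (intro eq_vecI) (auto simp: scalar_prod_def sum_distrib_left mult.assoc)
  with M ev show ?thesis
    unfolding eigenvector_def by (simp add: smult_smult_assoc)
qed

lemma spectral_radius_eigenvector:
  assumes "M \<in> carrier_mat n n" "n > 0"
  obtains v \<mu> where "eigenvector M v \<mu>" "spectral_radius M = norm \<mu>"
  using spectral_radius_mem_max(1)[OF assms]
  unfolding spectrum_def eigenvalue_def by auto

lemma spectral_radius_smult_mat_ge:
  assumes M: "M \<in> carrier_mat n n" and n: "n > 0"
  shows "norm c * spectral_radius M \<le> spectral_radius (c \<cdot>\<^sub>m M)"
proof -
  obtain v \<mu> where ev: "eigenvector M v \<mu>" and r: "spectral_radius M = norm \<mu>"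
    using spectral_radius_eigenvector[OF M n] .
  have "c * \<mu> \<in> spectrum (c \<cdot>\<^sub>m M)"
    using eigenvector_smult_mat[OF M ev] unfolding spectrum_def eigenvalue_def by auto
  then have "norm (c * \<mu>) \<le> spectral_radius (c \<cdot>\<^sub>m M)"
    using M n by (intro spectral_radius_mem_max(2)) auto
  with r show ?thesis
    by (simp add: norm_mult)
qed

lemma rho_nonneg:
  assumes "B \<in> carrier_mat n n" "n > 0"
  shows "0 \<le> rho B"
  using spectral_radius_mem_max(1)[of "map_mat complex_of_real B" n] assms
  unfolding rho_def by auto

lemma exists_max_ratio:
  fixes x y :: "'a \<Rightarrow> real"
  assumes fin: "finite I" and x: "\<forall>j\<in>I. 0 \<le> x j" and support: "\<forall>j\<in>I. x j = 0 \<longrightarrow> y j = 0"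
    and j0: "j0 \<in> I" "0 < y j0"
  obtains c i where "0 < c" "i \<in> I" "0 < x i" "y i = c * x i" "\<forall>j\<in>I. y j \<le> c * x j"
proof -
  \<comment> \<open>Indices with \<open>x j = 0\<close> contribute \<open>y j / 0 = 0\<close>, harmless by the support assumption.\<close>
  define c where "c = Max ((\<lambda>j. y j / x j) ` I)"
  have le_c: "y j / x j \<le> c" if "j \<in> I" for j
    unfolding c_def using fin that by (intro Max_ge) auto
  have "0 < x j0"
    using x support j0 by force
  then have c_pos: "0 < c"
    using le_c[OF j0(1)] divide_pos_pos[OF j0(2)] by fastforce
  have "c \<in> (\<lambda>j. y j / x j) ` I"
    unfolding c_def using fin j0(1) by (intro Max_in) auto
  then obtain i where i: "i \<in> I" "c = y i / x i"
    by auto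
  then have x_i: "0 < x i"
    using x c_pos by (cases "x i = 0") auto
  have "y j \<le> c * x j" if "j \<in> I" for j
    using le_c[OF that] x support that by (cases "x j = 0") (auto simp: divide_le_eq)
  with that[OF c_pos i(1) x_i] i x_i show ?thesis
    by simp
qed

lemma rho_le_of_subinvariant:
  fixes B :: "real mat" and x :: "nat \<Rightarrow> real"
  assumes B: "B \<in> carrier_mat n n" and n: "n > 0"
    and nonneg: "\<And>i j. i < n \<Longrightarrow> j < n \<Longrightarrow> 0 \<le> B $$ (i, j)"
    and x: "\<And>j. j < n \<Longrightarrow> 0 \<le> x j"
    and support: "\<And>i j. i < n \<Longrightarrow> j < n \<Longrightarrow> x i = 0 \<Longrightarrow> B $$ (i, j) = 0"
    and sub: "\<And>i. i < n \<Longrightarrow> (\<Sum>j<n. B $$ (i, j) * x j) \<le> s * x i"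
    and s: "0 \<le> s"
  shows "rho B \<le> s"
proof -
  let ?C = "map_mat complex_of_real B"
  have C: "?C \<in> carrier_mat n n"
    using B by simp
  obtain v \<mu> where ev: "eigenvector ?C v \<mu>" and r: "spectral_radius ?C = norm \<mu>"
    using spectral_radius_eigenvector[OF C n] .
  have eq: "\<mu> * v $ i = (\<Sum>j<n. complex_of_real (B $$ (i, j)) * v $ j)" if "i < n" for i
    using eigenvector_index[OF C ev that] B that by simp
  show ?thesis
  proof (cases "\<mu> = 0")
    case True
    with r s show ?thesis
      unfolding rho_def by simp
  next
    case False
    have v_support: "v $ j = 0" if "j < n" "x j = 0" for j
      using eq[OF that(1)] support[OF that(1) _ that(2)] False by simp
    obtain j0 where j0: "j0 < n" "v $ j0 \<noteq> 0"
      using ev B unfolding eigenvector_def by (auto simp: vec_eq_iff)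
    obtain c i where c: "0 < c" and i: "i < n" "0 < x i" "norm (v $ i) = c * x i"
      and bound: "\<forall>j<n. norm (v $ j) \<le> c * x j"
      by (rule exists_max_ratio[of "{..<n}" x "\<lambda>j. norm (v $ j)" j0]) (use x v_support j0 in auto)
    have "norm \<mu> * (c * x i) = norm (\<mu> * v $ i)"
      using i(3) by (simp add: norm_mult)
    also have "\<dots> = norm (\<Sum>j<n. complex_of_real (B $$ (i, j)) * v $ j)"
      using eq[OF i(1)] by simp
    also have "\<dots> \<le> (\<Sum>j<n. norm (complex_of_real (B $$ (i, j)) * v $ j))"
      by (rule norm_sum)
    also have "\<dots> = (\<Sum>j<n. B $$ (i, j) * norm (v $ j))"
      using nonneg[OF i(1)] by (intro sum.cong) (auto simp: norm_mult)
    also have "\<dots> \<le> (\<Sum>j<n. B $$ (i, j) * (c * x j))"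
      using nonneg[OF i(1)] bound by (intro sum_mono mult_left_mono) auto
    also have "\<dots> = c * (\<Sum>j<n. B $$ (i, j) * x j)"
      by (simp add: sum_distrib_left algebra_simps)
    also have "\<dots> \<le> s * (c * x i)"
      using sub[OF i(1)] c by (simp add: algebra_simps)
    finally have "norm \<mu> \<le> s"
      using c i(2) by simp
    with r show ?thesis
      unfolding rho_def by simp
  qed
qed

lemma mat_pow_nonneg:
  fixes D :: "real mat"
  assumes D: "D \<in> carrier_mat n n" and nonneg: "\<And>i j. i < n \<Longrightarrow> j < n \<Longrightarrow> 0 \<le> D $$ (i, j)"
  shows "i < n \<Longrightarrow> j < n \<Longrightarrow> 0 \<le> (D ^\<^sub>m k) $$ (i, j)"
proof (induction k arbitrary: i j)
  case 0
  with D show ?case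
    by simp
next
  case (Suc k)
  have "(D ^\<^sub>m Suc k) $$ (i, j) = (\<Sum>l<n. (D ^\<^sub>m k) $$ (i, l) * D $$ (l, j))"
    using index_mult_mat_sum[of "D ^\<^sub>m k" n D i j] D Suc.prems by simp
  also have "\<dots> \<ge> 0"
    using Suc nonneg by (intro sum_nonneg mult_nonneg_nonneg) auto
  finally show ?case .
qed

lemma mat_pow_superinvariant:
  fixes D :: "real mat" and x :: "nat \<Rightarrow> real"
  assumes D: "D \<in> carrier_mat n n" and nonneg: "\<And>i j. i < n \<Longrightarrow> j < n \<Longrightarrow> 0 \<le> D $$ (i, j)"
    and q: "0 \<le> q"
    and sup: "\<And>i. i < n \<Longrightarrow> q * x i \<le> (\<Sum>j<n. D $$ (i, j) * x j)"
  shows "i < n \<Longrightarrow> q ^ k * x i \<le> (\<Sum>j<n. (D ^\<^sub>m k) $$ (i, j) * x j)"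
proof (induction k arbitrary: i)
  case 0
  with D show ?case
    by (simp add: if_distrib[of "\<lambda>d. d * _"] cong: if_cong)
next
  case (Suc k)
  have "q ^ Suc k * x i \<le> q * (\<Sum>l<n. (D ^\<^sub>m k) $$ (i, l) * x l)"
    using Suc q by (simp add: mult.assoc mult_left_mono)
  also have "\<dots> = (\<Sum>l<n. (D ^\<^sub>m k) $$ (i, l) * (q * x l))"
    by (simp add: sum_distrib_left algebra_simps)
  also have "\<dots> \<le> (\<Sum>l<n. (D ^\<^sub>m k) $$ (i, l) * (\<Sum>j<n. D $$ (l, j) * x j))"
    using mat_pow_nonneg[OF D nonneg] Suc.prems sup by (intro sum_mono mult_left_mono) auto
  also have "\<dots> = (\<Sum>j<n. (\<Sum>l<n. (D ^\<^sub>m k) $$ (i, l) * D $$ (l, j)) * x j)"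
    by (simp add: sum_distrib_left sum_distrib_right mult.assoc) (rule sum.swap)
  also have "\<dots> = (\<Sum>j<n. (D ^\<^sub>m Suc k) $$ (i, j) * x j)"
    using index_mult_mat_sum[of "D ^\<^sub>m k" n D i] D Suc.prems by (intro sum.cong) auto
  finally show ?case .
qed

lemma scaled_mat_pow_bounded:
  fixes B :: "real mat"
  assumes B: "B \<in> carrier_mat n n" and n: "n > 0" and t: "rho B < t"
  shows "\<exists>c. \<forall>k i j. i < n \<longrightarrow> j < n \<longrightarrow> \<bar>(((1 / t) \<cdot>\<^sub>m B) ^\<^sub>m k) $$ (i, j)\<bar> \<le> c"
proof -
  let ?D = "(1 / t) \<cdot>\<^sub>m B"
  let ?C = "map_mat complex_of_real ?D"
  have t_pos: "0 < t"
    using rho_nonneg[OF B n] t by linarith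
  have C: "?C \<in> carrier_mat n n"
    using B by simp
  have "map_mat complex_of_real B = complex_of_real t \<cdot>\<^sub>m ?C"
    using B t_pos by (auto intro!: eq_matI)
  then have "t * spectral_radius ?C \<le> rho B"
    unfolding rho_def using spectral_radius_smult_mat_ge[OF C n, of "complex_of_real t"] t_pos by simp
  then have "t * spectral_radius ?C < t * 1"
    using t by simp
  then have "spectral_radius ?C < 1"
    using mult_less_cancel_left_pos[OF t_pos] by blast
  then obtain c where c: "\<And>k. norm_bound (?C ^\<^sub>m k) c"
    using spectral_radius_jnf_norm_bound_less_1_upper_triangular[OF C] by blast
  have "\<bar>(?D ^\<^sub>m k) $$ (i, j)\<bar> \<le> c" if "i < n" "j < n" for k i j
  proof -
    have "?C ^\<^sub>m k = map_mat complex_of_real (?D ^\<^sub>m k)"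
      using B by (intro of_real_hom.mat_hom_pow[of _ n, symmetric]) simp
    with c[of k] that B show ?thesis
      unfolding norm_bound_def by auto
  qed
  then show ?thesis
    by blast
qed

lemma rho_ge_of_superinvariant:
  fixes B :: "real mat" and x :: "nat \<Rightarrow> real"
  assumes B: "B \<in> carrier_mat n n" and n: "n > 0"
    and nonneg: "\<And>i j. i < n \<Longrightarrow> j < n \<Longrightarrow> 0 \<le> B $$ (i, j)"
    and x: "\<And>j. j < n \<Longrightarrow> 0 \<le> x j" and i0: "i0 < n" "0 < x i0"
    and sup: "\<And>i. i < n \<Longrightarrow> s * x i \<le> (\<Sum>j<n. B $$ (i, j) * x j)"
    and s: "0 < s"
  shows "s \<le> rho B"
proof (rule ccontr)
  assume "\<not> s \<le> rho B"
  \<comment> \<open>For \<open>rho B < t < s\<close> the powers of \<open>B / t\<close> stay bounded, yet they grow like \<open>(s / t)\<^sup>k\<close> along x.\<close>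
  define t where "t = (rho B + s) / 2"
  have t: "rho B < t" "t < s" "0 < t"
    using \<open>\<not> s \<le> rho B\<close> rho_nonneg[OF B n] unfolding t_def by auto
  let ?D = "(1 / t) \<cdot>\<^sub>m B"
  obtain c where c: "\<forall>k i j. i < n \<longrightarrow> j < n \<longrightarrow> \<bar>(?D ^\<^sub>m k) $$ (i, j)\<bar> \<le> c"
    using scaled_mat_pow_bounded[OF B n t(1)] by blast
  have D: "?D \<in> carrier_mat n n"
    using B by simp
  have D_nonneg: "0 \<le> ?D $$ (i, j)" if "i < n" "j < n" for i j
    using nonneg[OF that] t B that by simp
  have D_sup: "(s / t) * x i \<le> (\<Sum>j<n. ?D $$ (i, j) * x j)" if "i < n" for i
    using sup[OF that] t B that by (simp add: sum_divide_distrib[symmetric] divide_right_mono)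
  obtain k where k: "c * sum x {..<n} / x i0 < (s / t) ^ k"
    using real_arch_pow[of "s / t"] t by auto
  have "(s / t) ^ k * x i0 \<le> (\<Sum>j<n. (?D ^\<^sub>m k) $$ (i0, j) * x j)"
    using mat_pow_superinvariant[OF D D_nonneg _ D_sup i0(1)] t by simp
  also have "\<dots> \<le> (\<Sum>j<n. c * x j)"
    using c i0(1) x by (intro sum_mono mult_right_mono) (auto dest: abs_le_D1)
  also have "\<dots> = c * sum x {..<n}"
    by (simp add: sum_distrib_left)
  finally show False
    using k i0(2) by (simp add: field_simps)
qed

lemma Min_rho_row_permuted_le_mean:
  fixes A :: "real mat"
  assumes n: "n > 0"
    and nonneg: "\<And>i j. i < n \<Longrightarrow> j < n \<Longrightarrow> 0 \<le> A $$ (i, j)"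
  shows "Min (rho ` row_permuted n A) \<le> (\<Sum>i<n. \<Sum>j<n. A $$ (i, j)) / real n"
proof -
  define r where "r i = (\<Sum>j<n. A $$ (i, j))" for i
  define s where "s = sum r {..<n} / real n"
  obtain B where B: "B \<in> row_permuted n A"
    and B_sub: "\<forall>i<n. real n * (\<Sum>j<n. B $$ (i, j) * r j) \<le> r i * sum r {..<n}"
    using exists_row_permuted_le[OF n, of A r, folded r_def] by blast
  have B_carrier: "B \<in> carrier_mat n n"
    using B unfolding row_permuted_def by simp
  have r_nonneg: "0 \<le> r i" if "i < n" for i
    unfolding r_def using nonneg that by (intro sum_nonneg) auto
  have B_nonneg: "0 \<le> B $$ (i, j)" if "i < n" "j < n" for i j
    using row_permuted_nonneg[OF B nonneg that] .
  have "rho B \<le> s"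
  proof (rule rho_le_of_subinvariant[where x = r, OF B_carrier n B_nonneg r_nonneg])
    fix i j assume ij: "i < n" "j < n" "r i = 0"
    then have "\<forall>l<n. A $$ (i, l) = 0"
      using sum_nonneg_eq_0_iff[of "{..<n}" "\<lambda>l. A $$ (i, l)"] nonneg ij(1)
      unfolding r_def by auto
    then show "B $$ (i, j) = 0"
      using row_permuted_entry[OF B ij(1,2)] by force
  next
    fix i assume "i < n"
    then show "(\<Sum>j<n. B $$ (i, j) * r j) \<le> s * r i"
      using B_sub n unfolding s_def by (simp add: field_simps)
  next
    show "0 \<le> s"
      unfolding s_def using r_nonneg by (intro divide_nonneg_nonneg sum_nonneg) auto
  qed
  moreover have "Min (rho ` row_permuted n A) \<le> rho B"
    using finite_row_permuted B by (intro Min_le) auto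
  ultimately show ?thesis
    unfolding s_def r_def by simp
qed

lemma mean_le_Max_rho_row_permuted:
  fixes A :: "real mat"
  assumes n: "n > 0"
    and nonneg: "\<And>i j. i < n \<Longrightarrow> j < n \<Longrightarrow> 0 \<le> A $$ (i, j)"
  shows "(\<Sum>i<n. \<Sum>j<n. A $$ (i, j)) / real n \<le> Max (rho ` row_permuted n A)"
proof -
  define r where "r i = (\<Sum>j<n. A $$ (i, j))" for i
  define s where "s = sum r {..<n} / real n"
  obtain B where B: "B \<in> row_permuted n A"
    and B_sup: "\<forall>i<n. r i * sum r {..<n} \<le> real n * (\<Sum>j<n. B $$ (i, j) * r j)"
    using exists_row_permuted_ge[OF n, of A r, folded r_def] by blast
  have B_carrier: "B \<in> carrier_mat n n"
    using B unfolding row_permuted_def by simp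
  have r_nonneg: "0 \<le> r i" if "i < n" for i
    unfolding r_def using nonneg that by (intro sum_nonneg) auto
  have B_nonneg: "0 \<le> B $$ (i, j)" if "i < n" "j < n" for i j
    using row_permuted_nonneg[OF B nonneg that] .
  have "s \<le> rho B"
  proof (cases "\<exists>i0<n. 0 < r i0")
    case True
    then obtain i0 where i0: "i0 < n" "0 < r i0"
      by blast
    show ?thesis
    proof (rule rho_ge_of_superinvariant[where x = r, OF B_carrier n B_nonneg r_nonneg i0])
      fix i assume "i < n"
      then show "s * r i \<le> (\<Sum>j<n. B $$ (i, j) * r j)"
        using B_sup n unfolding s_def by (simp add: field_simps)
    next
      show "0 < s"
        unfolding s_def using i0 r_nonneg n
        by (intro divide_pos_pos) (auto intro: sum_pos2[of "{..<n}" i0 r])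
    qed
  next
    case False
    then have "sum r {..<n} = 0"
      using r_nonneg by (intro sum.neutral) (meson lessThan_iff not_less order_antisym)
    then have "s = 0"
      unfolding s_def by simp
    then show ?thesis
      using rho_nonneg[OF B_carrier n] by simp
  qed
  moreover have "rho B \<le> Max (rho ` row_permuted n A)"
    using finite_row_permuted B by (intro Max_ge) auto
  ultimately show ?thesis
    unfolding s_def r_def by simp
qed

theorem theorem3p1:
  fixes A :: "real mat" and n :: nat
  assumes "n \<ge> 1"
    and "A \<in> carrier_mat n n"
    and "\<forall>i<n. \<forall>j<n. A $$ (i, j) \<ge> 0"
  shows "Min (rho ` row_permuted n A) \<le> (\<Sum>i<n. \<Sum>j<n. A $$ (i, j)) / real n
       \<and> (\<Sum>i<n. \<Sum>j<n. A $$ (i, j)) / real n \<le> Max (rho ` row_permuted n A)"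
  using Min_rho_row_permuted_le_mean[of n A] mean_le_Max_rho_row_permuted[of n A] assms
  by simp

end
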